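(* For all integers $n\geq 1$ and $1\leq k\leq n$, $$\bigl|\{e\in\mathbf{I}_n(\underline{12}0):\mathrm{zero}(e)=k\}\bigr|=c_{n,k},$$ where the numbers $c_{n,k}$ are defined by $c_{1,1}=1$, $c_{n,0}=0$ for $n\geq1$, and $c_{n,k}=c_{n-1,k-1}+k\sum_{j=k}^{n-1}c_{n-1,j}$ for $n\geq 2$ and $1\leq k\leq n$ (with $c_{n-1,j}=0$ for $j>n-1$).
   Context: An inversion sequence of length $n$ is an integer sequence $e=e_1e_2\ldots e_n$ with $0\leq e_i<i$ for all $i$; the set of these is $\mathbf{I}_n$. A sequence $e$ avoids the vincular pattern $\underline{12}0$ if there are no indices $2\leq i<j\leq n$ with $e_j<e_{i-1}<e_i$; $\mathbf{I}_n(\underline{12}0)$ is the set of $\underline{12}0$-avoiding inversion sequences of length $n$. $\mathrm{zero}(e)$ is the number of entries of $e$ equal to $0$. *)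

theory Defs
  imports Main
begin

text \<open>Inversion sequences of length n, represented as lists e with
  e ! (i-1) = e_i (so the condition 0 \<le> e_i < i becomes e ! i \<le> i for i < n).\<close>
definition inv_seqs :: "nat \<Rightarrow> nat list set" where
  "inv_seqs n = {e. length e = n \<and> (\<forall>i<n. e ! i < i + 1)}"

text \<open>Avoidance of the vincular pattern 12-0: no indices 2 \<le> i < j \<le> n with
  e_j < e_(i-1) < e_i (translated to 0-based list positions).\<close>
definition avoids_12_0 :: "nat list \<Rightarrow> bool" where
  "avoids_12_0 e \<longleftrightarrow>
     \<not> (\<exists>i j. 2 \<le> i \<and> i < j \<and> j \<le> length e \<and>
              e ! (j - 1) < e ! (i - 2) \<and> e ! (i - 2) < e ! (i - 1))"

definition zero :: "nat list \<Rightarrow> nat" where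
  "zero e = length (filter (\<lambda>x. x = 0) e)"

text \<open>The numbers c(n,k): c(1,1)=1, c(n,0)=0 for n \<ge> 1,
  c(n,k) = c(n-1,k-1) + k * sum_{j=k}^{n-1} c(n-1,j) for n \<ge> 2, 1 \<le> k \<le> n,
  with c(n,k) = 0 for k > n. (c(0,_) is not used; set to 0.)\<close>
fun c :: "nat \<Rightarrow> nat \<Rightarrow> nat" where
  "c 0 k = 0"
| "c (Suc 0) k = (if k = 1 then 1 else 0)"
| "c (Suc (Suc m)) k =
     (if k = 0 \<or> k > Suc (Suc m) then 0
      else c (Suc m) (k - 1) + k * (\<Sum>j=k..Suc m. c (Suc m) j))"

end

theory Submission
  imports Defs
begin

(*
  Cut e at its (k+1)-st zero, e = Q 0 R.  No occurrence of 12-0 can straddle that 0, so e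
  avoids the pattern iff Q 0 and R do, and the count factorises over the position of the cut.
  Suffixes R without zeros correspond to arbitrary suffixes by decrementing every entry.
  A prefix Q (a sequence that may be followed by a 0) with k+1 zeros either has no fixed point
  Q ! t = t with 0 < t (positions are 0-based), and then Q = 0 Q', or its last such fixed point
  is preceded by a 0 (the ascent Q ! (t-1) < t is followed by the final 0) and deleting it
  leaves a prefix with k+1 zeros;
  conversely such a fixed point can be inserted after any of the k+1 zeros.  So the numbers of
  prefixes satisfy p(q+1,k+1) = p(q,k) + (k+1) p(q,k+1), and summing over the cut turns this into
  a(n+1,k+1) = sum_{j>=k} a(n,j) + k sum_{j>k} a(n,j), the recurrence of c.
*)

section \<open>Index bounds and the pattern 12-0 on lists\<close>

fun index_bounded :: "nat \<Rightarrow> nat list \<Rightarrow> bool" where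
  "index_bounded s [] = True"
| "index_bounded s (x # xs) \<longleftrightarrow> x \<le> s \<and> index_bounded (Suc s) xs"

lemma index_bounded_iff_nth: "index_bounded s xs \<longleftrightarrow> (\<forall>i<length xs. xs ! i \<le> s + i)"
  by (induction xs arbitrary: s) (simp_all add: All_less_Suc2)

lemma index_bounded_append:
  "index_bounded s (xs @ ys) \<longleftrightarrow> index_bounded s xs \<and> index_bounded (s + length xs) ys"
  by (induction xs arbitrary: s) auto

lemma index_bounded_mono: "index_bounded s xs \<Longrightarrow> s \<le> t \<Longrightarrow> index_bounded t xs"
  by (induction xs arbitrary: s t) auto

lemma index_bounded_map_Suc: "index_bounded (Suc s) (map Suc xs) \<longleftrightarrow> index_bounded s xs"
  by (induction xs arbitrary: s) auto

lemma index_bounded_Suc_no_fixed_point: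
  assumes "index_bounded (Suc s) xs" and "\<forall>i<length xs. xs ! i \<noteq> Suc (s + i)"
  shows "index_bounded s xs"
  using assms by (fastforce simp: index_bounded_iff_nth le_Suc_eq)

lemma finite_index_bounded: "finite {xs. length xs = n \<and> index_bounded s xs}"
proof (rule finite_subset)
  show "{xs. length xs = n \<and> index_bounded s xs} \<subseteq> {xs. set xs \<subseteq> {..s + n} \<and> length xs = n}"
    by (auto simp: index_bounded_iff_nth in_set_conv_nth) (meson add_left_mono le_trans less_imp_le)
qed (rule finite_lists_length_eq, simp)

lemma inv_seqs_eq: "inv_seqs n = {e. length e = n \<and> index_bounded 0 e}"
  by (auto simp: inv_seqs_def index_bounded_iff_nth)

lemma avoids_12_0_iff_nth:
  "avoids_12_0 e \<longleftrightarrow>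
     (\<forall>i j. Suc i < j \<longrightarrow> j < length e \<longrightarrow> e ! i < e ! Suc i \<longrightarrow> e ! i \<le> e ! j)"
proof -
  have "(\<exists>i j. 2 \<le> i \<and> i < j \<and> j \<le> length e \<and>
           e ! (j - 1) < e ! (i - 2) \<and> e ! (i - 2) < e ! (i - 1)) \<longleftrightarrow>
        (\<exists>i j. Suc i < j \<and> j < length e \<and> e ! j < e ! i \<and> e ! i < e ! Suc i)"
    (is "?occurs_1_based \<longleftrightarrow> ?occurs")
  proof
    assume ?occurs_1_based
    then obtain i j where "2 \<le> i" "i < j" "j \<le> length e"
      "e ! (j - 1) < e ! (i - 2)" "e ! (i - 2) < e ! (i - 1)"
      by blast
    moreover have "i - 1 = Suc (i - 2)"
      using \<open>2 \<le> i\<close> by simp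
    ultimately show ?occurs
      by (intro exI[of _ "i - 2"] exI[of _ "j - 1"]) auto
  next
    assume ?occurs
    then obtain i j where "Suc i < j" "j < length e" "e ! j < e ! i" "e ! i < e ! Suc i"
      by blast
    then show ?occurs_1_based
      by (intro exI[of _ "i + 2"] exI[of _ "j + 1"]) auto
  qed
  then show ?thesis
    unfolding avoids_12_0_def by (meson not_le)
qed

lemma avoids_12_0_Nil [simp]: "avoids_12_0 []"
  and avoids_12_0_singleton [simp]: "avoids_12_0 [x]"
  by (simp_all add: avoids_12_0_iff_nth)

lemma avoids_12_0_Cons_Cons [simp]:
  "avoids_12_0 (x # y # ys) \<longleftrightarrow> (x < y \<longrightarrow> (\<forall>z\<in>set ys. x \<le> z)) \<and> avoids_12_0 (y # ys)"
proof
  assume avoids: "avoids_12_0 (x # y # ys)"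
  have "x \<le> ys ! k" if "x < y" "k < length ys" for k
    using avoids that unfolding avoids_12_0_iff_nth
    by (metis Suc_less_eq length_Cons nth_Cons_0 nth_Cons_Suc zero_less_Suc)
  moreover have "avoids_12_0 (y # ys)"
    using avoids unfolding avoids_12_0_iff_nth by (metis Suc_less_eq length_Cons nth_Cons_Suc)
  ultimately show "(x < y \<longrightarrow> (\<forall>z\<in>set ys. x \<le> z)) \<and> avoids_12_0 (y # ys)"
    by (auto simp: in_set_conv_nth)
next
  assume "(x < y \<longrightarrow> (\<forall>z\<in>set ys. x \<le> z)) \<and> avoids_12_0 (y # ys)"
  then have head: "x < y \<longrightarrow> (\<forall>z\<in>set ys. x \<le> z)" and tail: "avoids_12_0 (y # ys)"
    by blast+
  show "avoids_12_0 (x # y # ys)"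
    unfolding avoids_12_0_iff_nth
  proof (intro allI impI)
    fix i j
    assume ij: "Suc i < j" "j < length (x # y # ys)" "(x # y # ys) ! i < (x # y # ys) ! Suc i"
    then obtain j' where j: "j = Suc j'" by (cases j) auto
    show "(x # y # ys) ! i \<le> (x # y # ys) ! j"
    proof (cases i)
      case 0
      then show ?thesis using head ij j by (cases j') (auto simp: nth_mem)
    next
      case (Suc i')
      then show ?thesis using tail ij j unfolding avoids_12_0_iff_nth by auto
    qed
  qed
qed

lemma avoids_12_0_Cons_zero: "avoids_12_0 (0 # ys) \<longleftrightarrow> avoids_12_0 ys"
  by (cases ys) auto

lemma avoids_12_0_ConsD: "avoids_12_0 (x # xs) \<Longrightarrow> avoids_12_0 xs"
  by (cases xs) auto

lemma avoids_12_0_Cons_hd_le: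
  "avoids_12_0 ys \<Longrightarrow> (ys \<noteq> [] \<Longrightarrow> hd ys \<le> x) \<Longrightarrow> avoids_12_0 (x # ys)"
  by (cases ys) auto

lemma avoids_12_0_map_strict_mono:
  assumes "strict_mono f"
  shows "avoids_12_0 (map f xs) \<longleftrightarrow> avoids_12_0 xs"
  by (induction xs rule: induct_list012)
     (simp_all add: strict_mono_less[OF assms] strict_mono_less_eq[OF assms])

(* An ascent in front of the 0 must start with 0, and nothing lies below 0. *)
lemma avoids_12_0_append_zero:
  "avoids_12_0 (xs @ 0 # ys) \<longleftrightarrow> avoids_12_0 (xs @ [0]) \<and> avoids_12_0 ys"
proof (induction xs)
  case Nil
  then show ?case by (simp add: avoids_12_0_Cons_zero)
next
  case (Cons x xs)
  then show ?case by (cases xs) auto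
qed

lemma zero_Nil [simp]: "zero [] = 0"
  and zero_Cons [simp]: "zero (x # xs) = (if x = 0 then Suc (zero xs) else zero xs)"
  and zero_append [simp]: "zero (xs @ ys) = zero xs + zero ys"
  by (simp_all add: zero_def)

lemma zero_eq_0_iff: "zero xs = 0 \<longleftrightarrow> 0 \<notin> set xs"
  by (induction xs) auto

lemma zero_le_length: "zero xs \<le> length xs"
  by (simp add: zero_def)

lemma zero_eq_card: "zero xs = card {i. i < length xs \<and> xs ! i = 0}"
  by (simp add: zero_def length_filter_conv_card)

lemma split_at_zero_exists: "Suc k \<le> zero e \<Longrightarrow> \<exists>Q R. e = Q @ 0 # R \<and> zero Q = k"
proof (induction e arbitrary: k)
  case Nil
  then show ?case by simp
next
  case (Cons x e)
  show ?case
  proof (cases "x = 0 \<and> k = 0")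
    case True
    then show ?thesis by (intro exI[of _ "[]"] exI[of _ e]) auto
  next
    case False
    then obtain k' where "Suc k' \<le> zero e" and k: "k = (if x = 0 then Suc k' else k')"
      using Cons.prems by (cases k) (auto split: if_splits)
    then obtain Q R where "e = Q @ 0 # R" "zero Q = k'" using Cons.IH by blast
    then show ?thesis using k by (intro exI[of _ "x # Q"] exI[of _ R]) auto
  qed
qed

lemma split_at_zero_unique:
  "Q1 @ 0 # R1 = Q2 @ 0 # R2 \<Longrightarrow> zero Q1 = zero Q2 \<Longrightarrow> Q1 = Q2 \<and> R1 = R2"
proof (induction Q1 arbitrary: Q2)
  case Nil
  then show ?case by (cases Q2) auto
next
  case (Cons x Q1)
  then show ?case by (cases Q2) (auto split: if_splits)
qed

section \<open>Prefixes in front of a zero\<close>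

definition prefixes :: "nat \<Rightarrow> nat \<Rightarrow> nat list set" where
  "prefixes q k = {Q. length Q = q \<and> index_bounded 0 Q \<and> avoids_12_0 (Q @ [0]) \<and> zero Q = k}"

definition insert_fixed_point :: "nat list \<Rightarrow> nat \<Rightarrow> nat list" where
  "insert_fixed_point Q i = take (Suc i) Q @ Suc i # drop (Suc i) Q"

lemma finite_prefixes: "finite (prefixes q k)"
  by (rule finite_subset[OF _ finite_index_bounded[of q 0]]) (auto simp: prefixes_def)

lemma prefixes_subset: "prefixes q k \<subseteq> {Q. length Q = q \<and> zero Q = k}"
  by (auto simp: prefixes_def)

lemma prefixes_0: "prefixes 0 k = (if k = 0 then {[]} else {})"
  by (auto simp: prefixes_def)

lemma prefixes_Suc_0: "prefixes (Suc q) 0 = {}"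
  by (auto simp: prefixes_def length_Suc_conv)

lemma Cons_zero_mem_prefixes: "Q \<in> prefixes q k \<Longrightarrow> 0 # Q \<in> prefixes (Suc q) (Suc k)"
  by (auto simp: prefixes_def avoids_12_0_Cons_zero intro: index_bounded_mono)

lemma insert_fixed_point_mem_prefixes_iff:
  assumes "\<forall>j<length B. B ! j \<noteq> Suc (Suc (length A + j))"
  shows "A @ 0 # Suc (length A) # B \<in> prefixes (Suc q) k \<longleftrightarrow> A @ 0 # B \<in> prefixes q k"
proof -
  let ?l = "Suc (length A)"
  have "index_bounded (Suc ?l) B \<longleftrightarrow> index_bounded ?l B"
    using index_bounded_Suc_no_fixed_point[of ?l B] assms by (auto intro: index_bounded_mono)
  then have bounded: "index_bounded 0 (A @ 0 # ?l # B) \<longleftrightarrow> index_bounded 0 (A @ 0 # B)"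
    by (simp add: index_bounded_append)
  have "avoids_12_0 (?l # B @ [0]) \<longleftrightarrow> avoids_12_0 (B @ [0])" if "index_bounded ?l B"
    using that by (cases B) (auto intro: avoids_12_0_Cons_hd_le dest: avoids_12_0_ConsD)
  then have "avoids_12_0 ((A @ 0 # ?l # B) @ [0]) \<longleftrightarrow> avoids_12_0 ((A @ 0 # B) @ [0])"
    if "index_bounded 0 (A @ 0 # B)"
    using that avoids_12_0_append_zero[of A "?l # B @ [0]"] avoids_12_0_append_zero[of A "B @ [0]"]
    by (simp add: index_bounded_append)
  then show ?thesis
    using bounded by (auto simp: prefixes_def)
qed

lemma insert_fixed_point_eq:
  "i < length Q \<Longrightarrow> insert_fixed_point Q i = take i Q @ Q ! i # Suc i # drop (Suc i) Q"
  by (simp add: insert_fixed_point_def take_Suc_conv_app_nth)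

lemma insert_fixed_point_mem_prefixes:
  assumes Q: "Q \<in> prefixes q k" and "i < q" "Q ! i = 0"
  shows "insert_fixed_point Q i \<in> prefixes (Suc q) k"
proof -
  let ?A = "take i Q" and ?B = "drop (Suc i) Q"
  have split: "Q = ?A @ 0 # ?B" and len: "length ?A = i"
    using Q assms id_take_nth_drop[of i Q] by (auto simp: prefixes_def)
  have "index_bounded (Suc i) ?B"
    using Q len by (subst (asm) split) (simp add: prefixes_def index_bounded_append)
  then have no_fixed_point: "\<forall>j<length ?B. ?B ! j \<noteq> Suc (Suc (length ?A + j))"
    using len by (fastforce simp: index_bounded_iff_nth)
  have "?A @ 0 # ?B \<in> prefixes q k"
    using Q by (simp only: split[symmetric])
  then have "?A @ 0 # Suc (length ?A) # ?B \<in> prefixes (Suc q) k"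
    using insert_fixed_point_mem_prefixes_iff[OF no_fixed_point] by blast
  moreover have "insert_fixed_point Q i = ?A @ 0 # Suc (length ?A) # ?B"
    using Q assms len by (simp add: insert_fixed_point_eq prefixes_def)
  ultimately show ?thesis by simp
qed

lemma nth_insert_fixed_point_self: "i < length Q \<Longrightarrow> insert_fixed_point Q i ! Suc i = Suc i"
  by (simp add: insert_fixed_point_def nth_append)

lemma nth_insert_fixed_point_less:
  assumes "index_bounded 0 Q" "Suc i < j" "j \<le> length Q"
  shows "insert_fixed_point Q i ! j < j"
proof -
  have "insert_fixed_point Q i ! j = Q ! (j - 1)"
    using assms(2,3) by (simp add: insert_fixed_point_def nth_append numeral_2_eq_2 Suc_diff_Suc)
  also have "\<dots> \<le> j - 1"
    using assms by (simp add: index_bounded_iff_nth)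
  also have "\<dots> < j"
    using assms(2) by simp
  finally show ?thesis .
qed

lemma insert_fixed_point_inject:
  assumes eq: "insert_fixed_point Q1 i1 = insert_fixed_point Q2 i2"
    and bounded: "index_bounded 0 Q1" "index_bounded 0 Q2"
    and len: "length Q1 = length Q2" "i1 < length Q1" "i2 < length Q2"
  shows "Q1 = Q2 \<and> i1 = i2"
proof -
  have "\<not> i < i'" if "insert_fixed_point Q i = insert_fixed_point Q' i'"
    "index_bounded 0 Q" "length Q = length Q'" "i' < length Q'" for Q Q' i i'
    using that nth_insert_fixed_point_self[of i' Q'] nth_insert_fixed_point_less[of Q i "Suc i'"]
    by auto
  then have "i1 = i2"
    using assms by (metis linorder_neqE_nat)
  then show ?thesis
    using eq len by (simp add: insert_fixed_point_def append_eq_append_conv)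
      (metis append_take_drop_id)
qed

lemma prefixes_pred_fixed_point:
  assumes Q: "Q \<in> prefixes q k" and t: "0 < t" "t < q" "Q ! t = t"
  shows "Q ! (t - 1) = 0"
proof -
  have "Q ! (t - 1) \<le> t - 1"
    using Q t by (simp add: prefixes_def index_bounded_iff_nth)
  then have "(Q @ [0]) ! (t - 1) < (Q @ [0]) ! Suc (t - 1)"
    using Q t by (simp add: prefixes_def nth_append) linarith
  moreover have "avoids_12_0 (Q @ [0])" and "length Q = q"
    using Q by (simp_all add: prefixes_def)
  ultimately have "(Q @ [0]) ! (t - 1) \<le> (Q @ [0]) ! q"
    using t unfolding avoids_12_0_iff_nth by simp
  then show ?thesis
    using t \<open>length Q = q\<close> by (simp add: nth_append split: if_splits)
qed

lemma prefixes_remove_last_fixed_point: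
  assumes Q: "Q \<in> prefixes (Suc q) k" and t: "0 < t" "t < Suc q" "Q ! t = t"
    and last: "\<And>u. t < u \<Longrightarrow> u < Suc q \<Longrightarrow> Q ! u \<noteq> u"
  obtains Q' where "Q = insert_fixed_point Q' (t - 1)" "Q' \<in> prefixes q k"
    "t - 1 < q" "Q' ! (t - 1) = 0"
proof -
  define i where "i = t - 1"
  define A where "A = take i Q"
  define B where "B = drop (Suc t) Q"
  have len: "length Q = Suc q" "length A = i" and ti: "t = Suc i"
    using Q t by (auto simp: prefixes_def A_def i_def)
  have "Q = take t Q @ Q ! t # B"
    using t len id_take_nth_drop[of t Q] by (simp add: B_def)
  moreover have "Q ! i = 0"
    using prefixes_pred_fixed_point[OF Q t] by (simp add: i_def)
  then have "take t Q = A @ [0]"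
    using ti len t by (simp add: A_def take_Suc_conv_app_nth)
  ultimately have "Q = (A @ [0]) @ Q ! t # B"
    by simp
  then have Q_eq: "Q = A @ 0 # Suc (length A) # B"
    using t ti len by simp
  have "\<forall>j<length B. B ! j \<noteq> Suc (Suc (length A + j))"
    using last len ti by (auto simp: B_def)
  then have Q': "A @ 0 # B \<in> prefixes q k"
    using Q Q_eq insert_fixed_point_mem_prefixes_iff by metis
  moreover have "Q = insert_fixed_point (A @ 0 # B) i"
    using Q_eq len by (simp add: insert_fixed_point_def)
  moreover have "i < q" "(A @ 0 # B) ! i = 0"
    using Q' len by (auto simp: prefixes_def)
  ultimately show thesis
    using that unfolding i_def by blast
qed

lemma prefixes_Suc_Suc_cases:
  assumes Q: "Q \<in> prefixes (Suc q) (Suc k)"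
  obtains (Cons_zero) Q' where "Q = 0 # Q'" "Q' \<in> prefixes q k"
    | (insert) Q' i where "Q = insert_fixed_point Q' i" "Q' \<in> prefixes q (Suc k)"
        "i < q" "Q' ! i = 0"
proof (cases "\<exists>t. 0 < t \<and> t < Suc q \<and> Q ! t = t")
  case False
  obtain Q' where Q': "Q = 0 # Q'"
    using Q by (cases Q) (auto simp: prefixes_def)
  have "\<forall>j<length Q'. Q' ! j \<noteq> Suc j"
    using False Q Q' by (auto simp: prefixes_def)
  then have "Q' \<in> prefixes q k"
    using Q Q' index_bounded_Suc_no_fixed_point[of 0 Q']
    by (auto simp: prefixes_def avoids_12_0_Cons_zero)
  then show thesis
    using Q' Cons_zero by blast
next
  case True
  define fixed_points where "fixed_points = {t. 0 < t \<and> t < Suc q \<and> Q ! t = t}"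
  define t where "t = Max fixed_points"
  have fin: "finite fixed_points" and "fixed_points \<noteq> {}"
    using True by (auto simp: fixed_points_def)
  then have "t \<in> fixed_points"
    unfolding t_def by (rule Max_in)
  then have t: "0 < t" "t < Suc q" "Q ! t = t"
    by (simp_all add: fixed_points_def)
  have last: "Q ! u \<noteq> u" if "t < u" "u < Suc q" for u
  proof
    assume "Q ! u = u"
    then have "u \<in> fixed_points"
      using t(1) that by (simp add: fixed_points_def)
    then show False
      using Max_ge[OF fin] that(1) unfolding t_def by fastforce
  qed
  obtain Q' where "Q = insert_fixed_point Q' (t - 1)" "Q' \<in> prefixes q (Suc k)" "t - 1 < q"
    "Q' ! (t - 1) = 0"
    using prefixes_remove_last_fixed_point[OF Q t last] by blast
  then show thesis
    using insert by blast
qed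

lemma card_prefixes_Suc_Suc:
  "card (prefixes (Suc q) (Suc k)) = card (prefixes q k) + Suc k * card (prefixes q (Suc k))"
proof -
  define S where "S = (SIGMA Q:prefixes q (Suc k). {i. i < q \<and> Q ! i = 0})"
  let ?ins = "\<lambda>(Q, i). insert_fixed_point Q i"
  have prefixes_eq: "prefixes (Suc q) (Suc k) = Cons 0 ` prefixes q k \<union> ?ins ` S"
  proof
    show "prefixes (Suc q) (Suc k) \<subseteq> Cons 0 ` prefixes q k \<union> ?ins ` S"
      by (auto simp: S_def elim!: prefixes_Suc_Suc_cases)
    show "Cons 0 ` prefixes q k \<union> ?ins ` S \<subseteq> prefixes (Suc q) (Suc k)"
      using Cons_zero_mem_prefixes insert_fixed_point_mem_prefixes by (auto simp: S_def)
  qed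
  have "Cons 0 ` prefixes q k \<inter> ?ins ` S = {}"
  proof -
    have "0 # Q \<noteq> insert_fixed_point Q' i" if "Q \<in> prefixes q k" "(Q', i) \<in> S" for Q Q' i
    proof -
      have "(0 # Q) ! Suc i \<le> i" "insert_fixed_point Q' i ! Suc i = Suc i"
        using that by (auto simp: S_def prefixes_def index_bounded_iff_nth nth_insert_fixed_point_self)
      then show ?thesis by (metis Suc_n_not_le_n)
    qed
    then show ?thesis by auto
  qed
  moreover have "inj_on ?ins S"
    by (rule inj_onI) (auto simp: S_def prefixes_def dest: insert_fixed_point_inject)
  moreover have "finite S"
    using finite_prefixes by (simp add: S_def)
  ultimately have "card (prefixes (Suc q) (Suc k)) = card (prefixes q k) + card S"
    by (simp add: prefixes_eq card_Un_disjoint finite_prefixes card_image)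
  also have "card S = (\<Sum>Q\<in>prefixes q (Suc k). card {i. i < q \<and> Q ! i = 0})"
    using finite_prefixes by (simp add: S_def)
  also have "\<dots> = (\<Sum>Q\<in>prefixes q (Suc k). Suc k)"
    by (rule sum.cong) (auto simp: prefixes_def zero_eq_card)
  finally show ?thesis by simp
qed

section \<open>Cutting at a zero\<close>

definition avoiders :: "nat \<Rightarrow> nat \<Rightarrow> nat list set" where
  "avoiders n k = {e \<in> inv_seqs n. avoids_12_0 e \<and> zero e = k}"

definition avoiders_at_least :: "nat \<Rightarrow> nat \<Rightarrow> nat list set" where
  "avoiders_at_least n k = {e \<in> inv_seqs n. avoids_12_0 e \<and> k \<le> zero e}"

definition suffixes :: "nat \<Rightarrow> nat \<Rightarrow> nat list set" where
  "suffixes s l = {R. length R = l \<and> index_bounded s R \<and> avoids_12_0 R}"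

lemma finite_suffixes: "finite (suffixes s l)"
  by (rule finite_subset[OF _ finite_index_bounded[of l s]]) (auto simp: suffixes_def)

lemma finite_avoiders: "finite (avoiders n k)"
  by (rule finite_subset[OF _ finite_index_bounded[of n 0]]) (auto simp: avoiders_def inv_seqs_eq)

lemma concat_zero_avoiding_iff:
  "Q @ 0 # R \<in> inv_seqs n \<and> avoids_12_0 (Q @ 0 # R) \<longleftrightarrow>
     length Q < n \<and> Q \<in> prefixes (length Q) (zero Q) \<and>
     R \<in> suffixes (Suc (length Q)) (n - Suc (length Q))"
  using avoids_12_0_append_zero[of Q R]
  by (auto simp: inv_seqs_eq prefixes_def suffixes_def index_bounded_append)

lemma avoiding_split_at_zero:
  "{e \<in> inv_seqs n. avoids_12_0 e \<and> Suc k \<le> zero e \<and> P (zero e)} =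
     (\<Union>q<n. (\<lambda>(Q, R). Q @ 0 # R) `
        (prefixes q k \<times> {R \<in> suffixes (Suc q) (n - Suc q). P (Suc k + zero R)}))"
  (is "?avoiders = ?concats")
proof
  show "?avoiders \<subseteq> ?concats"
  proof
    fix e assume e: "e \<in> ?avoiders"
    then obtain Q R where QR: "e = Q @ 0 # R" "zero Q = k"
      using split_at_zero_exists by blast
    moreover have "Q @ 0 # R \<in> inv_seqs n \<and> avoids_12_0 (Q @ 0 # R)"
      using e QR(1) by simp
    then have "length Q < n" "Q \<in> prefixes (length Q) k"
      "R \<in> suffixes (Suc (length Q)) (n - Suc (length Q))"
      using QR(2) by (simp_all only: concat_zero_avoiding_iff)
    moreover have "P (Suc k + zero R)"
      using e QR by simp
    ultimately show "e \<in> ?concats"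
      by (intro UN_I[of "length Q"] image_eqI[of _ _ "(Q, R)"]) auto
  qed
  show "?concats \<subseteq> ?avoiders"
  proof
    fix e assume "e \<in> ?concats"
    then obtain Q R where e: "e = Q @ 0 # R" "length Q < n" "Q \<in> prefixes (length Q) k"
        "R \<in> suffixes (Suc (length Q)) (n - Suc (length Q))" "P (Suc k + zero R)"
      by (force simp: prefixes_def)
    then show "e \<in> ?avoiders"
      using concat_zero_avoiding_iff[of Q R n] by (simp add: prefixes_def)
  qed
qed

lemma card_concat_zero:
  assumes "\<And>q. finite (P q)" "\<And>q. P q \<subseteq> {Q. length Q = q \<and> zero Q = k}" "\<And>q. finite (X q)"
  shows "card (\<Union>q<n. (\<lambda>(Q, R). Q @ 0 # R) ` (P q \<times> X q)) = (\<Sum>q<n. card (P q) * card (X q))"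
proof -
  let ?concat = "\<lambda>(Q, R). Q @ 0 # R"
  have unique: "Q1 = Q2 \<and> R1 = R2"
    if "Q1 \<in> P q1" "Q2 \<in> P q2" "Q1 @ 0 # R1 = Q2 @ 0 # R2" for Q1 Q2 R1 R2 q1 q2
    using split_at_zero_unique[OF that(3)] that assms(2) by blast
  have "inj_on ?concat (P q \<times> X q)" for q
  proof (rule inj_onI)
    fix x y assume "x \<in> P q \<times> X q" "y \<in> P q \<times> X q" "?concat x = ?concat y"
    then show "x = y"
      using unique[of "fst x" q "fst y" q "snd x" "snd y"] by (auto simp: case_prod_beta)
  qed
  moreover have "?concat ` (P q1 \<times> X q1) \<inter> ?concat ` (P q2 \<times> X q2) = {}"
    if "q1 \<noteq> q2" for q1 q2
  proof -
    have "q1 = q2" if "Q1 \<in> P q1" "Q2 \<in> P q2" "Q1 @ 0 # R1 = Q2 @ 0 # R2" for Q1 Q2 R1 R2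
      using unique[OF that] that(1,2) assms(2) by blast
    then show ?thesis
      using \<open>q1 \<noteq> q2\<close> by auto
  qed
  ultimately show ?thesis
    using assms(1,3) by (simp add: card_UN_disjoint card_image card_cartesian_product)
qed

lemma card_zero_free_suffixes: "card {R \<in> suffixes (Suc s) l. zero R = 0} = card (suffixes s l)"
proof -
  have "{R \<in> suffixes (Suc s) l. zero R = 0} = map Suc ` suffixes s l"
  proof
    show "map Suc ` suffixes s l \<subseteq> {R \<in> suffixes (Suc s) l. zero R = 0}"
      by (auto simp: suffixes_def index_bounded_map_Suc avoids_12_0_map_strict_mono
          strict_mono_Suc_iff zero_eq_0_iff)
    show "{R \<in> suffixes (Suc s) l. zero R = 0} \<subseteq> map Suc ` suffixes s l"
    proof
      fix R assume R: "R \<in> {R \<in> suffixes (Suc s) l. zero R = 0}"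
      define R' where "R' = map (\<lambda>x. x - 1) R"
      have "0 < x" if "x \<in> set R" for x
        using R that by (auto simp: zero_eq_0_iff intro: gr0I)
      then have R_eq: "R = map Suc R'"
        by (auto simp: R'_def intro!: map_idI[symmetric])
      have "R' \<in> suffixes s l"
        using R unfolding R_eq
        by (simp add: suffixes_def index_bounded_map_Suc avoids_12_0_map_strict_mono strict_mono_Suc_iff)
      then show "R \<in> map Suc ` suffixes s l"
        using R_eq by blast
    qed
  qed
  moreover have "inj_on (map Suc) (suffixes s l)"
    by (simp add: inj_on_def)
  ultimately show ?thesis
    by (simp add: card_image)
qed

lemma card_avoiders_Suc:
  "card (avoiders n (Suc k)) = (\<Sum>q<n. card (prefixes q k) * card (suffixes q (n - Suc q)))"
proof -
  have "avoiders n (Suc k) = {e \<in> inv_seqs n. avoids_12_0 e \<and> Suc k \<le> zero e \<and> zero e = Suc k}"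
    by (auto simp: avoiders_def)
  also have "\<dots> = (\<Union>q<n. (\<lambda>(Q, R). Q @ 0 # R) `
      (prefixes q k \<times> {R \<in> suffixes (Suc q) (n - Suc q). zero R = 0}))"
    using avoiding_split_at_zero[of n k "\<lambda>z. z = Suc k"] by simp
  finally have "card (avoiders n (Suc k)) =
      (\<Sum>q<n. card (prefixes q k) * card {R \<in> suffixes (Suc q) (n - Suc q). zero R = 0})"
    by (simp add: card_concat_zero[OF finite_prefixes prefixes_subset] finite_suffixes)
  then show ?thesis
    by (simp add: card_zero_free_suffixes)
qed

lemma card_avoiders_at_least_Suc:
  "card (avoiders_at_least n (Suc k)) =
     (\<Sum>q<n. card (prefixes q k) * card (suffixes (Suc q) (n - Suc q)))"
proof -
  have "avoiders_at_least n (Suc k) = {e \<in> inv_seqs n. avoids_12_0 e \<and> Suc k \<le> zero e \<and> True}"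
    by (simp add: avoiders_at_least_def)
  also have "\<dots> =
      (\<Union>q<n. (\<lambda>(Q, R). Q @ 0 # R) ` (prefixes q k \<times> suffixes (Suc q) (n - Suc q)))"
    using avoiding_split_at_zero[of n k "\<lambda>_. True"] by simp
  finally show ?thesis
    by (simp add: card_concat_zero[OF finite_prefixes prefixes_subset] finite_suffixes)
qed

lemma card_avoiders_at_least: "card (avoiders_at_least n k) = (\<Sum>j=k..n. card (avoiders n j))"
proof -
  have "avoiders_at_least n k = (\<Union>j\<in>{k..n}. avoiders n j)"
    using zero_le_length by (fastforce simp: avoiders_at_least_def avoiders_def inv_seqs_def)
  also have "card \<dots> = (\<Sum>j=k..n. card (avoiders n j))"
    by (rule card_UN_disjoint) (use finite_avoiders in \<open>auto simp: avoiders_def\<close>)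
  finally show ?thesis .
qed

lemma card_avoiders_Suc_Suc:
  "card (avoiders (Suc n) (Suc k)) =
     card (avoiders_at_least n k) + k * card (avoiders_at_least n (Suc k))"
proof (cases k)
  case 0
  have "card (avoiders (Suc n) (Suc k)) = card (suffixes 0 n)"
    by (simp add: card_avoiders_Suc sum.lessThan_Suc_shift prefixes_0 prefixes_Suc_0 0
        del: sum.lessThan_Suc)
  also have "suffixes 0 n = avoiders_at_least n k"
    by (auto simp: 0 suffixes_def avoiders_at_least_def inv_seqs_eq)
  finally show ?thesis
    using 0 by simp
next
  case (Suc k')
  have "card (avoiders (Suc n) (Suc k)) =
      (\<Sum>q<n. card (prefixes (Suc q) k) * card (suffixes (Suc q) (n - Suc q)))"
    by (simp add: card_avoiders_Suc sum.lessThan_Suc_shift prefixes_0 Suc del: sum.lessThan_Suc)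
  also have "\<dots> = card (avoiders_at_least n k) + k * card (avoiders_at_least n (Suc k))"
    by (simp add: Suc card_prefixes_Suc_Suc card_avoiders_at_least_Suc algebra_simps
        sum.distrib sum_distrib_left)
  finally show ?thesis .
qed

lemma avoiders_Suc_0: "avoiders (Suc n) 0 = {}"
  by (auto simp: avoiders_def inv_seqs_eq length_Suc_conv)

lemma avoiders_1: "avoiders (Suc 0) k = (if k = 1 then {[0]} else {})"
  by (auto simp: avoiders_def inv_seqs_eq length_Suc_conv)

lemma card_avoiders: "1 \<le> n \<Longrightarrow> card (avoiders n k) = c n k"
proof (induction n arbitrary: k rule: nat_induct_at_least)
  case base
  then show ?case
    by (simp add: avoiders_1)
next
  case (Suc n)
  then obtain m where m: "n = Suc m"
    by (cases n) auto
  show ?case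
  proof (cases k)
    case 0
    then show ?thesis
      using m by (simp add: avoiders_Suc_0)
  next
    case (Suc j)
    have "card (avoiders (Suc n) k) = (\<Sum>i=j..n. c n i) + j * (\<Sum>i=Suc j..n. c n i)"
      using Suc.IH by (simp add: Suc card_avoiders_Suc_Suc card_avoiders_at_least)
    also have "\<dots> = c (Suc n) k"
    proof (cases "j \<le> n")
      case True
      then have "(\<Sum>i=j..n. c n i) = c n j + (\<Sum>i=Suc j..n. c n i)"
        by (rule sum.atLeast_Suc_atMost)
      then show ?thesis
        using m Suc True by simp
    next
      case False
      then show ?thesis
        using m Suc by simp
    qed
    finally show ?thesis .
  qed
qed

theorem mainTheorem2:
  fixes n k :: nat
  assumes "1 \<le> n" and "1 \<le> k" and "k \<le> n"
  shows "card {e \<in> inv_seqs n. avoids_12_0 e \<and> zero e = k} = c n k"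
  using card_avoiders[OF assms(1)] by (simp add: avoiders_def)

end
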